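(* Let $(X,\to,d_A)$ be a metric transition system over $A$. For every $d\in\mathit{DPMet}(X)$ and $x,y\in X$, \[\beta_S(d)(x,y)=\bigvee_{(a,x')\in\delta(x)}\ \bigwedge_{(b,y')\in\delta(y)}\max\{d_A(a,b),d(x',y')\},\] i.e. $\beta_S(d)=(d_A\otimes d)_{\overrightarrow H}\circ(\delta\times\delta)$. Moreover, if the transition system is finitely branching, $\beta_S$ is continuous.
   Context: A metric transition system over $A$ is $(X,\to,d_A)$ with $\to\subseteq X\times A\times X$ and a metric $d_A\colon A\times A\to[0,1]$; $\delta(x)=\{(a,x')\mid x\xrightarrow{a}x'\}$; finitely branching means every $\delta(x)$ is finite. $r\oplus s=\min\{r+s,1\}$, $r\ominus s=\max\{0,r-s\}$; $\bigvee\emptyset=0$, $\bigwedge\emptyset=1$. $\mathit{DPMet}(X)$: directed pseudo-metrics on $X$ ($d(x,x)=0$, $d(x,z)\le d(x,y)\oplus d(y,z)$, values in $[0,1]$), ordered pointwise. $\alpha_S(\mathcal F)(x_1,x_2)=\bigvee_{f\in\mathcal F}(f(x_1)\ominus f(x_2))$ for $\mathcal F\subseteq[0,1]^X$; $\gamma_S(d)=\{f\in[0,1]^X\mid\forall x_1,x_2\colon f(x_1)\ominus f(x_2)\le d(x_1,x_2)\}$. $\bigcirc_cf(x)=\bigvee\{(1-d_A(b,c))\land f(x')\mid x\xrightarrow{b}x'\}$. $\mathit{lo}_S(\mathcal F)=\bigcup_{c\in A}\{\bigcirc_cf\mid f\in\mathrm{cl}^{\land,\mathrm{sh}}_f(\mathcal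 F)\}$, where $\mathrm{cl}^{\land,\mathrm{sh}}_f(\mathcal F)$ is the closure of $\mathcal F$ under finite meets (pointwise minimum, the empty meet being the constant 1) and constant shifts $f\mapsto f\ominus r$, $f\mapsto f\oplus r$ ($r\in[0,1]$). $\beta_S=\alpha_S\circ\mathit{lo}_S\circ\gamma_S$. Continuous means preserving suprema of well-ordered chains. *)

theory Defs
  imports Main "HOL.Real"
begin

definition oplus01 :: "real \<Rightarrow> real \<Rightarrow> real" where
  "oplus01 r s = min (r + s) 1"

definition ominus01 :: "real \<Rightarrow> real \<Rightarrow> real" where
  "ominus01 r s = max 0 (r - s)"

definition sup01 :: "real set \<Rightarrow> real" where
  "sup01 S = (if S = {} then 0 else Sup S)"

definition inf01 :: "real set \<Rightarrow> real" where
  "inf01 S = (if S = {} then 1 else Inf S)"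

definition metric01 :: "('a \<Rightarrow> 'a \<Rightarrow> real) \<Rightarrow> bool" where
  "metric01 dA \<longleftrightarrow>
     (\<forall>a b. 0 \<le> dA a b \<and> dA a b \<le> 1) \<and>
     (\<forall>a b. dA a b = 0 \<longleftrightarrow> a = b) \<and>
     (\<forall>a b. dA a b = dA b a) \<and>
     (\<forall>a b c. dA a c \<le> dA a b + dA b c)"

definition delta :: "('x \<times> 'a \<times> 'x) set \<Rightarrow> 'x \<Rightarrow> ('a \<times> 'x) set" where
  "delta T x = {(a, x'). (x, a, x') \<in> T}"

definition finitely_branching :: "('x \<times> 'a \<times> 'x) set \<Rightarrow> bool" where
  "finitely_branching T \<longleftrightarrow> (\<forall>x. finite (delta T x))"

definition DPMet :: "('x \<Rightarrow> 'x \<Rightarrow> real) set" where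
  "DPMet = {d. (\<forall>x y. 0 \<le> d x y \<and> d x y \<le> 1) \<and>
               (\<forall>x. d x x = 0) \<and>
               (\<forall>x y z. d x z \<le> oplus01 (d x y) (d y z))}"

definition alphaS :: "('x \<Rightarrow> real) set \<Rightarrow> 'x \<Rightarrow> 'x \<Rightarrow> real" where
  "alphaS F x1 x2 = sup01 {ominus01 (f x1) (f x2) | f. f \<in> F}"

definition gammaS :: "('x \<Rightarrow> 'x \<Rightarrow> real) \<Rightarrow> ('x \<Rightarrow> real) set" where
  "gammaS d = {f. (\<forall>x. 0 \<le> f x \<and> f x \<le> 1) \<and>
                  (\<forall>x1 x2. ominus01 (f x1) (f x2) \<le> d x1 x2)}"

definition nextop :: "('x \<times> 'a \<times> 'x) set \<Rightarrow> ('a \<Rightarrow> 'a \<Rightarrow> real) \<Rightarrow> 'a \<Rightarrow> ('x \<Rightarrow> real) \<Rightarrow> 'x \<Rightarrow> real" where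
  "nextop T dA c f x = sup01 {min (1 - dA b c) (f x') | b x'. (x, b, x') \<in> T}"

text \<open>Closure under finite meets (binary meets plus the empty meet, the constant 1)
  and constant shifts by r in [0,1].\<close>
inductive_set cl_meet_shift :: "('x \<Rightarrow> real) set \<Rightarrow> ('x \<Rightarrow> real) set" for F where
  base: "f \<in> F \<Longrightarrow> f \<in> cl_meet_shift F"
| top: "(\<lambda>_. 1) \<in> cl_meet_shift F"
| meet: "f \<in> cl_meet_shift F \<Longrightarrow> g \<in> cl_meet_shift F \<Longrightarrow> (\<lambda>x. min (f x) (g x)) \<in> cl_meet_shift F"
| shift_down: "f \<in> cl_meet_shift F \<Longrightarrow> 0 \<le> r \<Longrightarrow> r \<le> 1 \<Longrightarrow> (\<lambda>x. ominus01 (f x) r) \<in> cl_meet_shift F"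
| shift_up: "f \<in> cl_meet_shift F \<Longrightarrow> 0 \<le> r \<Longrightarrow> r \<le> 1 \<Longrightarrow> (\<lambda>x. oplus01 (f x) r) \<in> cl_meet_shift F"

definition loS :: "('x \<times> 'a \<times> 'x) set \<Rightarrow> ('a \<Rightarrow> 'a \<Rightarrow> real) \<Rightarrow> ('x \<Rightarrow> real) set \<Rightarrow> ('x \<Rightarrow> real) set" where
  "loS T dA F = {nextop T dA c f | c f. f \<in> cl_meet_shift F}"

definition betaS :: "('x \<times> 'a \<times> 'x) set \<Rightarrow> ('a \<Rightarrow> 'a \<Rightarrow> real) \<Rightarrow> ('x \<Rightarrow> 'x \<Rightarrow> real) \<Rightarrow> 'x \<Rightarrow> 'x \<Rightarrow> real" where
  "betaS T dA d = alphaS (loS T dA (gammaS d))"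

definition is_lub_in :: "('x \<Rightarrow> 'x \<Rightarrow> real) set \<Rightarrow> ('x \<Rightarrow> 'x \<Rightarrow> real) set \<Rightarrow> ('x \<Rightarrow> 'x \<Rightarrow> real) \<Rightarrow> bool" where
  "is_lub_in P D s \<longleftrightarrow> s \<in> P \<and> (\<forall>d\<in>D. d \<le> s) \<and> (\<forall>u\<in>P. (\<forall>d\<in>D. d \<le> u) \<longrightarrow> s \<le> u)"

definition well_ordered_chain :: "('x \<Rightarrow> 'x \<Rightarrow> real) set \<Rightarrow> bool" where
  "well_ordered_chain D \<longleftrightarrow>
     (\<forall>d1\<in>D. \<forall>d2\<in>D. d1 \<le> d2 \<or> d2 \<le> d1) \<and>
     (\<forall>E. E \<subseteq> D \<and> E \<noteq> {} \<longrightarrow> (\<exists>e\<in>E. \<forall>e'\<in>E. e \<le> e'))"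

definition continuous_DPMet :: "(('x \<Rightarrow> 'x \<Rightarrow> real) \<Rightarrow> ('x \<Rightarrow> 'x \<Rightarrow> real)) \<Rightarrow> bool" where
  "continuous_DPMet \<Phi> \<longleftrightarrow>
     (\<forall>D s. D \<noteq> {} \<and> D \<subseteq> DPMet \<and> well_ordered_chain D \<and> is_lub_in DPMet D s
        \<longrightarrow> is_lub_in DPMet (\<Phi> ` D) (\<Phi> s))"

end

theory Submission
  imports Defs
begin

(*
  Non-expansive [0,1]-valued functions are closed under finite meets and truncated shifts,
  so the closure in lo_S is idle on gamma_S(d), and beta_S(d)(x,y) is the supremum of
  (nextop c f)(x) - (nextop c f)(y) over labels c and non-expansive f.  Every such difference is
  at most the directed Hausdorff distance H(d)(x,y) between the move sets of x and y, because
  each move (a,x') of x is answered by moves (b,y') of y with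
  min(1 - d_A(a,c), f x') - min(1 - d_A(b,c), f y') <= max(d_A(a,b), d(x',y')).
  Conversely, for a move (a,x') of x the test c = a, f = 1 - d(x', -) attains the inner
  infimum belonging to (a,x').

  Continuity: beta_S = H on DPMet, and under finite branching H(d)(x,y) only depends on the
  finitely many values of d on pairs of successors.  On these, the pointwise supremum of a
  chain, which dominates its least upper bound in DPMet, is approximated up to epsilon by a
  single member of the chain.
*)

lemma min_diff_le_max_diff: "min p q - min p' q' \<le> max (p - p') (q - q')"
  for p q p' q' :: real
  by (simp add: min_def max_def)

lemma ominus01_unit: "r \<in> {0..1} \<Longrightarrow> s \<in> {0..1} \<Longrightarrow> ominus01 r s \<in> {0..1}"
  by (simp add: ominus01_def)

lemma ominus01_min_le: "ominus01 (min a a') (min b b') \<le> max (ominus01 a b) (ominus01 a' b')"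
  by (simp add: ominus01_def min_def max_def)

lemma ominus01_shift_down_le: "ominus01 (ominus01 a r) (ominus01 b r) \<le> ominus01 a b"
  by (simp add: ominus01_def max_def)

lemma ominus01_shift_up_le: "ominus01 (oplus01 a r) (oplus01 b r) \<le> ominus01 a b"
  by (simp add: ominus01_def oplus01_def min_def max_def)

lemma sup01_le_iff:
  assumes "S \<subseteq> {0..1}" and "0 \<le> c"
  shows "sup01 S \<le> c \<longleftrightarrow> (\<forall>t\<in>S. t \<le> c)"
proof (cases "S = {}")
  case False
  have "bdd_above S" using assms(1) by (meson bdd_above_Icc bdd_above_mono)
  with False show ?thesis by (simp add: sup01_def cSup_le_iff)
qed (simp add: sup01_def assms(2))

lemma le_inf01_iff:
  assumes "S \<subseteq> {0..1}" and "c \<le> 1"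
  shows "c \<le> inf01 S \<longleftrightarrow> (\<forall>t\<in>S. c \<le> t)"
proof (cases "S = {}")
  case False
  have "bdd_below S" using assms(1) by (meson bdd_below_Icc bdd_below_mono)
  with False show ?thesis by (simp add: inf01_def le_cInf_iff)
qed (simp add: inf01_def assms(2))

lemma sup01_unit:
  assumes "S \<subseteq> {0..1}"
  shows "sup01 S \<in> {0..1}"
proof (cases "S = {}")
  case False
  then obtain t where t: "t \<in> S" by blast
  have "bdd_above S" using assms by (meson bdd_above_Icc bdd_above_mono)
  with t have "t \<le> Sup S" by (rule cSup_upper)
  moreover have "Sup S \<le> 1" using False assms by (intro cSup_least) auto
  ultimately show ?thesis using t assms False by (auto simp: sup01_def)
qed (simp add: sup01_def)

lemma inf01_unit:
  assumes "S \<subseteq> {0..1}"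
  shows "inf01 S \<in> {0..1}"
proof (cases "S = {}")
  case False
  then obtain t where t: "t \<in> S" by blast
  have "bdd_below S" using assms by (meson bdd_below_Icc bdd_below_mono)
  with t have "Inf S \<le> t" by (rule cInf_lower)
  moreover have "0 \<le> Inf S" using False assms by (intro cInf_greatest) auto
  ultimately show ?thesis using t assms False by (auto simp: inf01_def)
qed (simp add: inf01_def)

lemma sup01_upper: "t \<in> S \<Longrightarrow> S \<subseteq> {0..1} \<Longrightarrow> t \<le> sup01 S"
  using sup01_le_iff[of S "sup01 S"] sup01_unit[of S] by auto

lemma inf01_lower: "t \<in> S \<Longrightarrow> S \<subseteq> {0..1} \<Longrightarrow> inf01 S \<le> t"
  using le_inf01_iff[of S "inf01 S"] inf01_unit[of S] by auto

lemma mem_delta [simp]: "(a, x') \<in> delta T x \<longleftrightarrow> (x, a, x') \<in> T"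
  by (simp add: delta_def)

lemma metric01_unit: "metric01 dA \<Longrightarrow> dA a b \<in> {0..1}"
  by (simp add: metric01_def)

lemma metric01_eq_0_iff: "metric01 dA \<Longrightarrow> dA a b = 0 \<longleftrightarrow> a = b"
  by (simp add: metric01_def)

lemma metric01_commute: "metric01 dA \<Longrightarrow> dA a b = dA b a"
  by (simp add: metric01_def)

lemma metric01_triangle: "metric01 dA \<Longrightarrow> dA a c \<le> dA a b + dA b c"
  by (simp add: metric01_def)

lemma DPMet_nonneg: "d \<in> DPMet \<Longrightarrow> 0 \<le> d x y"
  by (simp add: DPMet_def)

lemma DPMet_le_1: "d \<in> DPMet \<Longrightarrow> d x y \<le> 1"
  by (simp add: DPMet_def)

lemma DPMet_refl: "d \<in> DPMet \<Longrightarrow> d x x = 0"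
  by (simp add: DPMet_def)

lemma DPMet_triangle: "d \<in> DPMet \<Longrightarrow> d x z \<le> d x y + d y z"
  unfolding DPMet_def oplus01_def by fastforce

section \<open>Non-expansive functions and the operator betaS\<close>

lemma gammaSI:
  "(\<And>x. f x \<in> {0..1}) \<Longrightarrow> (\<And>x1 x2. ominus01 (f x1) (f x2) \<le> d x1 x2) \<Longrightarrow> f \<in> gammaS d"
  by (simp add: gammaS_def)

lemma gammaS_unit: "f \<in> gammaS d \<Longrightarrow> f x \<in> {0..1}"
  by (simp add: gammaS_def)

lemma gammaS_ominus01_le: "f \<in> gammaS d \<Longrightarrow> ominus01 (f x1) (f x2) \<le> d x1 x2"
  by (simp add: gammaS_def)

lemma gammaS_const_1: "(\<And>x y. 0 \<le> d x y) \<Longrightarrow> (\<lambda>_. 1) \<in> gammaS d"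
  by (rule gammaSI) (simp_all add: ominus01_def)

lemma gammaS_min:
  assumes "f \<in> gammaS d" and "g \<in> gammaS d"
  shows "(\<lambda>x. min (f x) (g x)) \<in> gammaS d"
proof (rule gammaSI)
  show "min (f x) (g x) \<in> {0..1}" for x
    using gammaS_unit[OF assms(1)] gammaS_unit[OF assms(2)] by (simp add: min_def)
  show "ominus01 (min (f x1) (g x1)) (min (f x2) (g x2)) \<le> d x1 x2" for x1 x2
    using ominus01_min_le gammaS_ominus01_le[OF assms(1)] gammaS_ominus01_le[OF assms(2)]
    by (metis max.bounded_iff order.trans)
qed

lemma gammaS_shift_down:
  assumes "f \<in> gammaS d" and "r \<in> {0..1}"
  shows "(\<lambda>x. ominus01 (f x) r) \<in> gammaS d"
proof (rule gammaSI)
  show "ominus01 (f x) r \<in> {0..1}" for x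
    using gammaS_unit[OF assms(1)] assms(2) by (rule ominus01_unit)
  show "ominus01 (ominus01 (f x1) r) (ominus01 (f x2) r) \<le> d x1 x2" for x1 x2
    using ominus01_shift_down_le gammaS_ominus01_le[OF assms(1)] by (rule order.trans)
qed

lemma gammaS_shift_up:
  assumes "f \<in> gammaS d" and "r \<in> {0..1}"
  shows "(\<lambda>x. oplus01 (f x) r) \<in> gammaS d"
proof (rule gammaSI)
  show "oplus01 (f x) r \<in> {0..1}" for x
    using gammaS_unit[OF assms(1)] assms(2) by (simp add: oplus01_def)
  show "ominus01 (oplus01 (f x1) r) (oplus01 (f x2) r) \<le> d x1 x2" for x1 x2
    using ominus01_shift_up_le gammaS_ominus01_le[OF assms(1)] by (rule order.trans)
qed

lemma cl_meet_shift_gammaS: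
  assumes "\<And>x y. 0 \<le> d x y"
  shows "cl_meet_shift (gammaS d) = gammaS d"
proof
  show "cl_meet_shift (gammaS d) \<subseteq> gammaS d"
  proof
    fix f assume "f \<in> cl_meet_shift (gammaS d)"
    then show "f \<in> gammaS d"
      by induction (auto intro: gammaS_const_1 assms gammaS_min gammaS_shift_down gammaS_shift_up)
  qed
qed (auto intro: cl_meet_shift.base)

lemma nextop_unit:
  assumes "metric01 dA" and "\<forall>x. f x \<in> {0..1}"
  shows "nextop T dA c f x \<in> {0..1}"
  unfolding nextop_def
  by (rule sup01_unit) (use metric01_unit[OF assms(1)] assms(2) in fastforce)

lemma nextop_upper:
  assumes "metric01 dA" and "\<forall>x. f x \<in> {0..1}" and "(x, b, x') \<in> T"
  shows "min (1 - dA b c) (f x') \<le> nextop T dA c f x"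
  unfolding nextop_def
  by (rule sup01_upper) (use metric01_unit[OF assms(1)] assms(2,3) in fastforce)+

lemma nextop_le_iff:
  assumes "metric01 dA" and "\<forall>x. f x \<in> {0..1}" and "0 \<le> u"
  shows "nextop T dA c f x \<le> u \<longleftrightarrow> (\<forall>b x'. (x, b, x') \<in> T \<longrightarrow> min (1 - dA b c) (f x') \<le> u)"
  unfolding nextop_def
  by (subst sup01_le_iff) (use metric01_unit[OF assms(1)] assms(2,3) in fastforce)+

lemma alphaS_set_unit:
  "\<forall>f\<in>F. \<forall>x. f x \<in> {0..1} \<Longrightarrow> {ominus01 (f x1) (f x2) | f. f \<in> F} \<subseteq> {0..1}"
  by (auto intro!: ominus01_unit)

lemma alphaS_le_iff:
  assumes "\<forall>f\<in>F. \<forall>x. f x \<in> {0..1}" and "0 \<le> c"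
  shows "alphaS F x1 x2 \<le> c \<longleftrightarrow> (\<forall>f\<in>F. ominus01 (f x1) (f x2) \<le> c)"
  unfolding alphaS_def sup01_le_iff[OF alphaS_set_unit[OF assms(1)] assms(2)] by blast

lemma alphaS_unit: "\<forall>f\<in>F. \<forall>x. f x \<in> {0..1} \<Longrightarrow> alphaS F x1 x2 \<in> {0..1}"
  unfolding alphaS_def by (rule sup01_unit[OF alphaS_set_unit])

lemma alphaS_upper:
  "\<forall>f\<in>F. \<forall>x. f x \<in> {0..1} \<Longrightarrow> f \<in> F \<Longrightarrow> ominus01 (f x1) (f x2) \<le> alphaS F x1 x2"
  unfolding alphaS_def by (rule sup01_upper[OF _ alphaS_set_unit]) auto

lemma alphaS_DPMet:
  assumes F: "\<forall>f\<in>F. \<forall>x. f x \<in> {0..1}"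
  shows "alphaS F \<in> DPMet"
  unfolding DPMet_def
proof (intro CollectI conjI allI)
  fix x y
  show "0 \<le> alphaS F x y" "alphaS F x y \<le> 1" using alphaS_unit[OF F] by auto
next
  fix x
  have "alphaS F x x \<le> 0" by (subst alphaS_le_iff[OF F]) (auto simp: ominus01_def)
  then show "alphaS F x x = 0" using alphaS_unit[OF F, of x x] by simp
next
  fix x y z
  have "ominus01 (f x) (f z) \<le> oplus01 (alphaS F x y) (alphaS F y z)" if "f \<in> F" for f
  proof -
    have "f x \<in> {0..1}" "f z \<in> {0..1}" using F that by blast+
    then show ?thesis
      using alphaS_upper[OF F that, of x y] alphaS_upper[OF F that, of y z]
      by (simp add: ominus01_def oplus01_def)
  qed
  then show "alphaS F x z \<le> oplus01 (alphaS F x y) (alphaS F y z)"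
    using alphaS_unit[OF F] by (subst alphaS_le_iff[OF F]) (auto simp: oplus01_def)
qed

lemma betaS_eq_alphaS:
  assumes "\<And>x y. 0 \<le> d x y"
  shows "betaS T dA d = alphaS {nextop T dA c f | c f. f \<in> gammaS d}"
  by (simp add: betaS_def loS_def cl_meet_shift_gammaS[OF assms])

lemma nextop_gammaS_unit:
  "metric01 dA \<Longrightarrow> \<forall>g\<in>{nextop T dA c f | c f. f \<in> gammaS d}. \<forall>x. g x \<in> {0..1}"
  by (blast intro: nextop_unit gammaS_unit)

lemma betaS_DPMet:
  assumes "metric01 dA" and "\<And>x y. 0 \<le> d x y"
  shows "betaS T dA d \<in> DPMet"
  unfolding betaS_eq_alphaS[OF assms(2)] by (rule alphaS_DPMet[OF nextop_gammaS_unit[OF assms(1)]])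

section \<open>The directed Hausdorff lifting\<close>

text \<open>\<^term>\<open>hausdorff_lift T dA d\<close> is the paper's \<open>(d\<^sub>A \<otimes> d)\<^sub>H \<circ> (\<delta> \<times> \<delta>)\<close>,
  and \<^term>\<open>match_dist T dA d a x' y\<close> its inner infimum for the move \<open>(a, x')\<close>.\<close>

definition match_dist ::
    "('x \<times> 'a \<times> 'x) set \<Rightarrow> ('a \<Rightarrow> 'a \<Rightarrow> real) \<Rightarrow> ('x \<Rightarrow> 'x \<Rightarrow> real) \<Rightarrow> 'a \<Rightarrow> 'x \<Rightarrow> 'x \<Rightarrow> real" where
  "match_dist T dA d a x' y = inf01 {max (dA a b) (d x' y') | b y'. (b, y') \<in> delta T y}"

definition hausdorff_lift ::
    "('x \<times> 'a \<times> 'x) set \<Rightarrow> ('a \<Rightarrow> 'a \<Rightarrow> real) \<Rightarrow> ('x \<Rightarrow> 'x \<Rightarrow> real) \<Rightarrow> 'x \<Rightarrow> 'x \<Rightarrow> real" where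
  "hausdorff_lift T dA d x y = sup01 {match_dist T dA d a x' y | a x'. (a, x') \<in> delta T x}"

context
  fixes T :: "('x \<times> 'a \<times> 'x) set" and dA :: "'a \<Rightarrow> 'a \<Rightarrow> real" and d :: "'x \<Rightarrow> 'x \<Rightarrow> real"
  assumes dA: "metric01 dA" and d: "\<forall>x y. d x y \<in> {0..1}"
begin

lemma match_dist_set_unit: "{max (dA a b) (d x' y') | b y'. (b, y') \<in> delta T y} \<subseteq> {0..1}"
  using metric01_unit[OF dA] d by (auto simp: max_def)

lemma match_dist_unit: "match_dist T dA d a x' y \<in> {0..1}"
  unfolding match_dist_def by (rule inf01_unit[OF match_dist_set_unit])

lemma match_dist_le: "(y, b, y') \<in> T \<Longrightarrow> match_dist T dA d a x' y \<le> max (dA a b) (d x' y')"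
  unfolding match_dist_def by (rule inf01_lower[OF _ match_dist_set_unit]) auto

lemma le_match_dist_iff:
  "u \<le> 1 \<Longrightarrow> u \<le> match_dist T dA d a x' y \<longleftrightarrow> (\<forall>b y'. (y, b, y') \<in> T \<longrightarrow> u \<le> max (dA a b) (d x' y'))"
  unfolding match_dist_def le_inf01_iff[OF match_dist_set_unit] by auto

lemma hausdorff_lift_set_unit: "{match_dist T dA d a x' y | a x'. (a, x') \<in> delta T x} \<subseteq> {0..1}"
  using match_dist_unit by blast

lemma hausdorff_lift_unit: "hausdorff_lift T dA d x y \<in> {0..1}"
  unfolding hausdorff_lift_def by (rule sup01_unit[OF hausdorff_lift_set_unit])

lemma match_dist_le_hausdorff_lift:
  "(x, a, x') \<in> T \<Longrightarrow> match_dist T dA d a x' y \<le> hausdorff_lift T dA d x y"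
  unfolding hausdorff_lift_def by (rule sup01_upper[OF _ hausdorff_lift_set_unit]) auto

lemma hausdorff_lift_le_iff:
  "0 \<le> c \<Longrightarrow> hausdorff_lift T dA d x y \<le> c \<longleftrightarrow> (\<forall>a x'. (x, a, x') \<in> T \<longrightarrow> match_dist T dA d a x' y \<le> c)"
  unfolding hausdorff_lift_def sup01_le_iff[OF hausdorff_lift_set_unit] by auto

end

lemma nextop_le_add_hausdorff_lift:
  assumes dA: "metric01 dA" and d: "\<forall>x y. d x y \<in> {0..1}" and f: "f \<in> gammaS d"
  shows "nextop T dA c f x \<le> nextop T dA c f y + hausdorff_lift T dA d x y"
proof -
  have f_unit: "\<forall>z. f z \<in> {0..1}" using gammaS_unit[OF f] by blast
  let ?Ny = "nextop T dA c f y" and ?H = "hausdorff_lift T dA d x y"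
  have "min (1 - dA a c) (f x') \<le> ?Ny + ?H" if ax: "(x, a, x') \<in> T" for a x'
  proof -
    have "min (1 - dA a c) (f x') - ?Ny \<le> max (dA a b) (d x' y')" if yb: "(y, b, y') \<in> T" for b y'
    proof -
      have "min (1 - dA a c) (f x') - ?Ny \<le> min (1 - dA a c) (f x') - min (1 - dA b c) (f y')"
        using nextop_upper[OF dA f_unit yb] by simp
      also have "\<dots> \<le> max (dA b c - dA a c) (f x' - f y')"
        using min_diff_le_max_diff by simp
      also have "\<dots> \<le> max (dA a b) (d x' y')"
        using metric01_triangle[OF dA, of b c a] metric01_commute[OF dA, of a b]
          gammaS_ominus01_le[OF f, of x' y']
        by (auto simp: ominus01_def)
      finally show ?thesis .
    qed
    moreover have "f x' \<in> {0..1}" "?Ny \<in> {0..1}"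
      using f_unit nextop_unit[OF dA f_unit] by blast+
    ultimately have "min (1 - dA a c) (f x') - ?Ny \<le> match_dist T dA d a x' y"
      by (subst le_match_dist_iff[OF dA d]) auto
    also have "\<dots> \<le> ?H" by (rule match_dist_le_hausdorff_lift[OF dA d ax])
    finally show ?thesis by simp
  qed
  then show ?thesis
    using nextop_unit[OF dA f_unit] hausdorff_lift_unit[OF dA d]
    by (subst nextop_le_iff[OF dA f_unit]) auto
qed

lemma betaS_le_hausdorff_lift:
  assumes dA: "metric01 dA" and d: "d \<in> DPMet"
  shows "betaS T dA d x y \<le> hausdorff_lift T dA d x y"
proof -
  have d_unit: "\<forall>x y. d x y \<in> {0..1}" using DPMet_nonneg[OF d] DPMet_le_1[OF d] by simp
  have "ominus01 (nextop T dA c f x) (nextop T dA c f y) \<le> hausdorff_lift T dA d x y"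
    if "f \<in> gammaS d" for c f
    using nextop_le_add_hausdorff_lift[OF dA d_unit that, of T c x y]
      hausdorff_lift_unit[OF dA d_unit, of T x y]
    by (simp add: ominus01_def)
  then show ?thesis
    unfolding betaS_eq_alphaS[OF DPMet_nonneg[OF d]]
    using hausdorff_lift_unit[OF dA d_unit, of T x y]
    by (subst alphaS_le_iff[OF nextop_gammaS_unit[OF dA]]) auto
qed

lemma DPMet_complement_gammaS:
  assumes "d \<in> DPMet"
  shows "(\<lambda>z. 1 - d x' z) \<in> gammaS d"
proof (rule gammaSI)
  show "1 - d x' z \<in> {0..1}" for z using DPMet_nonneg[OF assms] DPMet_le_1[OF assms] by simp
  show "ominus01 (1 - d x' z1) (1 - d x' z2) \<le> d z1 z2" for z1 z2
    using DPMet_triangle[OF assms, of x' z2 z1] DPMet_nonneg[OF assms] by (simp add: ominus01_def)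
qed

lemma hausdorff_lift_le_betaS:
  assumes dA: "metric01 dA" and d: "d \<in> DPMet"
  shows "hausdorff_lift T dA d x y \<le> betaS T dA d x y"
proof -
  have d_unit: "\<forall>x y. d x y \<in> {0..1}" using DPMet_nonneg[OF d] DPMet_le_1[OF d] by simp
  have "match_dist T dA d a x' y \<le> betaS T dA d x y" if ax: "(x, a, x') \<in> T" for a x'
  proof -
    define f where "f = (\<lambda>z. 1 - d x' z)"
    have f: "f \<in> gammaS d" unfolding f_def by (rule DPMet_complement_gammaS[OF d])
    have f_unit: "\<forall>z. f z \<in> {0..1}" using gammaS_unit[OF f] by blast
    have "1 \<le> nextop T dA a f x"
      using nextop_upper[OF dA f_unit ax, of a] metric01_eq_0_iff[OF dA, of a a] DPMet_refl[OF d]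
      by (simp add: f_def)
    moreover have "nextop T dA a f y \<le> 1 - match_dist T dA d a x' y"
    proof -
      have "min (1 - dA b a) (f y') \<le> 1 - match_dist T dA d a x' y" if "(y, b, y') \<in> T" for b y'
        using match_dist_le[OF dA d_unit that, of a x'] metric01_commute[OF dA, of a b]
        by (auto simp: f_def min_def max_def)
      then show ?thesis
        using match_dist_unit[OF dA d_unit, of T a x' y] by (subst nextop_le_iff[OF dA f_unit]) auto
    qed
    moreover have "ominus01 (nextop T dA a f x) (nextop T dA a f y) \<le> betaS T dA d x y"
      unfolding betaS_eq_alphaS[OF DPMet_nonneg[OF d]]
      by (rule alphaS_upper[OF nextop_gammaS_unit[OF dA]]) (use f in blast)
    ultimately show ?thesis by (simp add: ominus01_def)
  qed
  then show ?thesis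
    using DPMet_nonneg[OF betaS_DPMet[OF dA DPMet_nonneg[OF d]]]
    by (subst hausdorff_lift_le_iff[OF dA d_unit]) auto
qed

lemma betaS_eq_hausdorff_lift:
  "metric01 dA \<Longrightarrow> d \<in> DPMet \<Longrightarrow> betaS T dA d = hausdorff_lift T dA d"
  by (intro ext antisym betaS_le_hausdorff_lift hausdorff_lift_le_betaS)

section \<open>Continuity\<close>

lemma hausdorff_lift_le_add:
  assumes dA: "metric01 dA"
    and d1: "\<forall>x y. d1 x y \<in> {0..1}" and d2: "\<forall>x y. d2 x y \<in> {0..1}" and e: "0 \<le> e"
    and le: "\<And>a x' b y'. (x, a, x') \<in> T \<Longrightarrow> (y, b, y') \<in> T \<Longrightarrow> d1 x' y' \<le> d2 x' y' + e"
  shows "hausdorff_lift T dA d1 x y \<le> hausdorff_lift T dA d2 x y + e"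
proof -
  have "match_dist T dA d1 a x' y \<le> hausdorff_lift T dA d2 x y + e" if ax: "(x, a, x') \<in> T" for a x'
  proof -
    have "match_dist T dA d1 a x' y - e \<le> max (dA a b) (d2 x' y')" if yb: "(y, b, y') \<in> T" for b y'
      using match_dist_le[OF dA d1 yb, of a x'] le[OF ax yb] e by linarith
    then have "match_dist T dA d1 a x' y - e \<le> match_dist T dA d2 a x' y"
      using match_dist_unit[OF dA d1, of T a x' y] e by (subst le_match_dist_iff[OF dA d2]) auto
    also have "\<dots> \<le> hausdorff_lift T dA d2 x y" by (rule match_dist_le_hausdorff_lift[OF dA d2 ax])
    finally show ?thesis by simp
  qed
  then show ?thesis
    using hausdorff_lift_unit[OF dA d2, of T x y] e by (subst hausdorff_lift_le_iff[OF dA d1]) auto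
qed

lemma betaS_mono:
  assumes dA: "metric01 dA" and "d1 \<in> DPMet" "d2 \<in> DPMet" and "d1 \<le> d2"
  shows "betaS T dA d1 \<le> betaS T dA d2"
proof (intro le_funI)
  fix x y
  have "hausdorff_lift T dA d1 x y \<le> hausdorff_lift T dA d2 x y + 0"
    using assms by (intro hausdorff_lift_le_add) (auto simp: le_fun_def DPMet_nonneg DPMet_le_1)
  then show "betaS T dA d1 x y \<le> betaS T dA d2 x y"
    using assms by (simp add: betaS_eq_hausdorff_lift)
qed

lemma DPMet_bdd_above: "D \<subseteq> DPMet \<Longrightarrow> bdd_above ((\<lambda>d. d x y) ` D)"
  by (intro bdd_aboveI[of _ 1]) (auto dest: DPMet_le_1)

lemma pointwise_Sup_DPMet:
  assumes "D \<noteq> {}" and D: "D \<subseteq> DPMet"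
  shows "(\<lambda>x y. SUP d\<in>D. d x y) \<in> DPMet"
proof -
  have upper: "d x y \<le> (SUP d\<in>D. d x y)" if "d \<in> D" for d x y
    using that DPMet_bdd_above[OF D] by (rule cSUP_upper)
  have least: "(SUP d\<in>D. d x y) \<le> c" if "\<And>d. d \<in> D \<Longrightarrow> d x y \<le> c" for x y c
    using assms(1) that by (rule cSUP_least)
  obtain d0 where d0: "d0 \<in> D" using assms(1) by blast
  show ?thesis
    unfolding DPMet_def
  proof (intro CollectI conjI allI)
    fix x y
    show "0 \<le> (SUP d\<in>D. d x y)"
      using upper[OF d0, of x y] DPMet_nonneg[of d0 x y] d0 D by auto
    show "(SUP d\<in>D. d x y) \<le> 1"
      using D by (intro least) (auto dest: DPMet_le_1)
  next
    fix x
    have "(SUP d\<in>D. d x x) \<le> 0"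
      using D by (intro least) (auto simp: DPMet_refl subset_iff)
    then show "(SUP d\<in>D. d x x) = 0"
      using upper[OF d0, of x x] DPMet_nonneg[of d0 x x] d0 D by auto
  next
    fix x y z
    show "(SUP d\<in>D. d x z) \<le> oplus01 (SUP d\<in>D. d x y) (SUP d\<in>D. d y z)"
    proof (rule least)
      fix d assume dD: "d \<in> D"
      then have "d \<in> DPMet" using D by blast
      then show "d x z \<le> oplus01 (SUP d\<in>D. d x y) (SUP d\<in>D. d y z)"
        using upper[OF dD, of x y] upper[OF dD, of y z] DPMet_triangle[of d x z y] DPMet_le_1[of d x z]
        by (simp add: oplus01_def)
    qed
  qed
qed

lemma chain_approximates_Sup_on_finite:
  fixes D :: "('x \<Rightarrow> 'x \<Rightarrow> real) set" and P :: "('x \<times> 'x) set"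
  assumes "finite P" and "D \<noteq> {}" and D: "D \<subseteq> DPMet"
    and chain: "\<forall>d1\<in>D. \<forall>d2\<in>D. d1 \<le> d2 \<or> d2 \<le> d1" and "0 < \<epsilon>"
  shows "\<exists>e\<in>D. \<forall>p q. (p, q) \<in> P \<longrightarrow> (SUP d\<in>D. d p q) \<le> e p q + \<epsilon>"
  using assms(1)
proof induction
  case empty
  then show ?case using assms(2) by blast
next
  case (insert pq P)
  obtain p q where pq: "pq = (p, q)" by fastforce
  from insert.IH obtain e1 where e1: "e1 \<in> D" "\<forall>p q. (p, q) \<in> P \<longrightarrow> (SUP d\<in>D. d p q) \<le> e1 p q + \<epsilon>"
    by blast
  have "bdd_above ((\<lambda>d. d p q) ` D)" by (rule DPMet_bdd_above[OF D])
  moreover have "(SUP d\<in>D. d p q) - \<epsilon> < (SUP d\<in>D. d p q)" using \<open>0 < \<epsilon>\<close> by simp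
  ultimately obtain e2 where e2: "e2 \<in> D" "(SUP d\<in>D. d p q) - \<epsilon> < e2 p q"
    using less_cSUP_iff[OF assms(2)] by blast
  have "e1 \<le> e2 \<or> e2 \<le> e1" using chain e1(1) e2(1) by blast
  then obtain e where e: "e \<in> D" "e1 \<le> e" "e2 \<le> e"
    using e1(1) e2(1) by blast
  have "(SUP d\<in>D. d p' q') \<le> e p' q' + \<epsilon>" if "(p', q') \<in> insert pq P" for p' q'
  proof (cases "(p', q') = (p, q)")
    case True
    then show ?thesis using e2(2) le_funD[OF le_funD[OF e(3)], of p q] by simp
  next
    case False
    then have "(SUP d\<in>D. d p' q') \<le> e1 p' q' + \<epsilon>" using e1(2) that pq by auto
    then show ?thesis using le_funD[OF le_funD[OF e(2)], of p' q'] by simp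
  qed
  then show ?case using e(1) by blast
qed

lemma betaS_le_SUP_chain:
  assumes dA: "metric01 dA" and fb: "finitely_branching T"
    and D: "D \<noteq> {}" "D \<subseteq> DPMet" and chain: "\<forall>d1\<in>D. \<forall>d2\<in>D. d1 \<le> d2 \<or> d2 \<le> d1"
    and s: "s \<in> DPMet" and s_le: "s \<le> (\<lambda>x y. SUP d\<in>D. d x y)"
  shows "betaS T dA s x y \<le> (SUP d\<in>D. betaS T dA d x y)"
proof (rule field_le_epsilon)
  fix \<epsilon> :: real assume "0 < \<epsilon>"
  let ?P = "snd ` delta T x \<times> snd ` delta T y"
  have "finite ?P" using fb by (simp add: finitely_branching_def)
  then obtain e where e: "e \<in> D" "\<forall>p q. (p, q) \<in> ?P \<longrightarrow> (SUP d\<in>D. d p q) \<le> e p q + \<epsilon>"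
    using chain_approximates_Sup_on_finite[OF _ D chain \<open>0 < \<epsilon>\<close>] by blast
  have e_DPMet: "e \<in> DPMet" using e(1) D(2) by blast
  have "hausdorff_lift T dA s x y \<le> hausdorff_lift T dA e x y + \<epsilon>"
  proof (rule hausdorff_lift_le_add[OF dA])
    show "\<forall>x y. s x y \<in> {0..1}" "\<forall>x y. e x y \<in> {0..1}"
      using s e_DPMet by (auto simp: DPMet_nonneg DPMet_le_1)
    show "0 \<le> \<epsilon>" using \<open>0 < \<epsilon>\<close> by simp
    fix a x' b y' assume "(x, a, x') \<in> T" "(y, b, y') \<in> T"
    then have "(x', y') \<in> ?P" by (force simp: delta_def)
    then have "(SUP d\<in>D. d x' y') \<le> e x' y' + \<epsilon>" using e(2) by blast
    then show "s x' y' \<le> e x' y' + \<epsilon>" using le_funD[OF le_funD[OF s_le], of x' y'] by linarith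
  qed
  moreover have "betaS T dA e x y \<le> (SUP d\<in>D. betaS T dA d x y)"
  proof (rule cSUP_upper[OF e(1)])
    show "bdd_above ((\<lambda>d. betaS T dA d x y) ` D)"
      using D(2) by (intro bdd_aboveI[of _ 1]) (auto intro: DPMet_le_1 betaS_DPMet[OF dA] DPMet_nonneg)
  qed
  ultimately show "betaS T dA s x y \<le> (SUP d\<in>D. betaS T dA d x y) + \<epsilon>"
    using betaS_eq_hausdorff_lift[OF dA s] betaS_eq_hausdorff_lift[OF dA e_DPMet] by simp
qed

lemma betaS_continuous:
  fixes T :: "('x \<times> 'a \<times> 'x) set"
  assumes dA: "metric01 dA" and fb: "finitely_branching T"
  shows "continuous_DPMet (betaS T dA)"
  unfolding continuous_DPMet_def
proof (intro allI impI)
  fix D :: "('x \<Rightarrow> 'x \<Rightarrow> real) set" and s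
  assume "D \<noteq> {} \<and> D \<subseteq> DPMet \<and> well_ordered_chain D \<and> is_lub_in DPMet D s"
  then have D: "D \<noteq> {}" "D \<subseteq> DPMet" and chain: "\<forall>d1\<in>D. \<forall>d2\<in>D. d1 \<le> d2 \<or> d2 \<le> d1"
    and s: "s \<in> DPMet" "\<forall>d\<in>D. d \<le> s" "\<forall>u\<in>DPMet. (\<forall>d\<in>D. d \<le> u) \<longrightarrow> s \<le> u"
    unfolding well_ordered_chain_def is_lub_in_def by blast+
  have "\<forall>d\<in>D. d \<le> (\<lambda>x y. SUP d\<in>D. d x y)"
    using cSUP_upper[OF _ DPMet_bdd_above[OF D(2)]] by (simp add: le_fun_def)
  then have "s \<le> (\<lambda>x y. SUP d\<in>D. d x y)"
    using s(3) pointwise_Sup_DPMet[OF D] by blast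
  then have s_le_SUP: "betaS T dA s x y \<le> (SUP d\<in>D. betaS T dA d x y)" for x y
    by (rule betaS_le_SUP_chain[OF dA fb D chain s(1)])
  show "is_lub_in DPMet (betaS T dA ` D) (betaS T dA s)"
    unfolding is_lub_in_def
  proof (intro conjI ballI impI)
    show "betaS T dA s \<in> DPMet" by (rule betaS_DPMet[OF dA DPMet_nonneg[OF s(1)]])
    show "e \<le> betaS T dA s" if "e \<in> betaS T dA ` D" for e
      using that s(1,2) D(2) betaS_mono[OF dA] by blast
    show "betaS T dA s \<le> u" if "u \<in> DPMet" "\<forall>e\<in>betaS T dA ` D. e \<le> u" for u
    proof (intro le_funI)
      fix x y
      have "(SUP d\<in>D. betaS T dA d x y) \<le> u x y"
        using that(2) D(1) by (intro cSUP_least) (auto simp: le_fun_def)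
      then show "betaS T dA s x y \<le> u x y" using s_le_SUP[of x y] by simp
    qed
  qed
qed

theorem mainTheorem6:
  fixes T :: "('x \<times> 'a \<times> 'x) set" and dA :: "'a \<Rightarrow> 'a \<Rightarrow> real"
  assumes "metric01 dA"
  shows "(\<forall>d \<in> DPMet. \<forall>x y.
            betaS T dA d x y =
              sup01 {inf01 {max (dA a b) (d x' y') | b y'. (b, y') \<in> delta T y}
                     | a x'. (a, x') \<in> delta T x})
       \<and> (finitely_branching T \<longrightarrow> continuous_DPMet (betaS T dA))"
proof (intro conjI ballI allI impI)
  fix d :: "'x \<Rightarrow> 'x \<Rightarrow> real" and x y
  assume "d \<in> DPMet"
  then show "betaS T dA d x y =
              sup01 {inf01 {max (dA a b) (d x' y') | b y'. (b, y') \<in> delta T y}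
                     | a x'. (a, x') \<in> delta T x}"
    by (simp add: betaS_eq_hausdorff_lift[OF assms] hausdorff_lift_def match_dist_def)
next
  assume "finitely_branching T"
  then show "continuous_DPMet (betaS T dA)" by (rule betaS_continuous[OF assms])
qed

end
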